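(* Let $P$ be a graded poset and let $\sim$ be an equivalence relation on $P$ such that $x\sim y$ implies $\rho(x)=\rho(y)$. On the set $P/\sim$ of equivalence classes define $X\le Y$ iff there exist $x\in X$, $y\in Y$ and $z_1,\dots,z_k\in P$ such that $x\le z_1\sim z_2\le z_3\sim\cdots\le z_{k-1}\sim z_k\le y$. Then: (1) $P/\sim$ with $\le$ is a poset; (2) for $X,Y\in P/\sim$, $X\lessdot Y$ if and only if $x\lessdot y$ for some $x\in X$ and $y\in Y$; (3) $P/\sim$ is graded, and for $X\in P/\sim$ we have $\rho(X)=\rho(x)$ for all $x\in X$.
   Context: $P$ is a finite graded poset with rank function $\rho$. *)

theory Defs
  imports Main
begin

definition poset_on :: "'a set \<Rightarrow> ('a \<Rightarrow> 'a \<Rightarrow> bool) \<Rightarrow> bool" where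
  "poset_on A le \<longleftrightarrow>
     (\<forall>x\<in>A. le x x) \<and>
     (\<forall>x\<in>A. \<forall>y\<in>A. le x y \<and> le y x \<longrightarrow> x = y) \<and>
     (\<forall>x\<in>A. \<forall>y\<in>A. \<forall>z\<in>A. le x y \<and> le y z \<longrightarrow> le x z)"

definition covers :: "'a set \<Rightarrow> ('a \<Rightarrow> 'a \<Rightarrow> bool) \<Rightarrow> 'a \<Rightarrow> 'a \<Rightarrow> bool" where
  "covers A le x y \<longleftrightarrow> x \<in> A \<and> y \<in> A \<and> le x y \<and> x \<noteq> y \<and>
     \<not> (\<exists>z\<in>A. le x z \<and> le z y \<and> z \<noteq> x \<and> z \<noteq> y)"

definition graded :: "'a set \<Rightarrow> ('a \<Rightarrow> 'a \<Rightarrow> bool) \<Rightarrow> ('a \<Rightarrow> nat) \<Rightarrow> bool" where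
  "graded A le rho \<longleftrightarrow> poset_on A le \<and>
     (\<forall>x\<in>A. (\<forall>y\<in>A. le y x \<longrightarrow> y = x) \<longrightarrow> rho x = 0) \<and>
     (\<forall>x y. covers A le x y \<longrightarrow> rho y = rho x + 1)"

definition le_rel :: "'a set \<Rightarrow> ('a \<Rightarrow> 'a \<Rightarrow> bool) \<Rightarrow> 'a rel" where
  "le_rel P le = {(a, b). a \<in> P \<and> b \<in> P \<and> le a b}"

text \<open>Quotient order: X \<le> Y iff there are x in X, y in Y and z_1..z_k with
x \<le> z_1 \<sim> z_2 \<le> ... \<sim> z_k \<le> y, i.e. (x,y) \<in> (\<le> O \<sim>)^* O \<le>.\<close>
definition quot_le :: "'a set \<Rightarrow> ('a \<Rightarrow> 'a \<Rightarrow> bool) \<Rightarrow> 'a rel \<Rightarrow> 'a set \<Rightarrow> 'a set \<Rightarrow> bool" where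
  "quot_le P le E X Y \<longleftrightarrow>
     (\<exists>x\<in>X. \<exists>y\<in>Y. (x, y) \<in> (le_rel P le O E)\<^sup>* O le_rel P le)"

end

theory Submission
  imports Defs
begin

text \<open>In a finite graded poset the rank is strictly monotone, so along any zigzag chain
  x \<le> z1 \<sim> z2 \<le> ... \<le> y the rank never decreases, and it stays constant only if all the
  \<open>\<le>\<close>-steps are equalities, i.e. only if x \<sim> y. Hence distinct related classes have
  strictly increasing ranks, which gives antisymmetry. If Y covers X in the quotient, every
  class met by a zigzag chain from X to Y lies between X and Y and so is X or Y; the chain
  therefore contains a single step u \<le> v with u \<in> X and v \<in> Y, and any element strictly
  between u and v would produce a class strictly between X and Y.\<close>

lemma interval_psubset_upper:
  assumes "poset_on P le" "x \<in> P" "y \<in> P" "z \<in> P" "le x y" "le z y" "z \<noteq> y"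
  shows "{w\<in>P. le x w \<and> le w z} \<subset> {w\<in>P. le x w \<and> le w y}"
  using assms unfolding poset_on_def by blast

lemma interval_psubset_lower:
  assumes "poset_on P le" "x \<in> P" "y \<in> P" "z \<in> P" "le x y" "le x z" "z \<noteq> x"
  shows "{w\<in>P. le z w \<and> le w y} \<subset> {w\<in>P. le x w \<and> le w y}"
  using assms unfolding poset_on_def by blast

lemma graded_rank_less:
  assumes "finite P" "graded P le rho" "x \<in> P" "y \<in> P" "le x y" "x \<noteq> y"
  shows "rho x < rho y"
  using assms(3-)
proof (induction "card {w\<in>P. le x w \<and> le w y}" arbitrary: x y rule: less_induct)
  case less
  have po: "poset_on P le" using \<open>graded P le rho\<close> unfolding graded_def by blast
  show ?case
  proof (cases "covers P le x y")
    case True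
    then show ?thesis using \<open>graded P le rho\<close> unfolding graded_def by force
  next
    case False
    then obtain z where z: "z \<in> P" "le x z" "le z y" "z \<noteq> x" "z \<noteq> y"
      using less.prems unfolding covers_def by blast
    have fin: "finite {w\<in>P. le x w \<and> le w y}" using \<open>finite P\<close> by simp
    have "{w\<in>P. le x w \<and> le w z} \<subset> {w\<in>P. le x w \<and> le w y}"
      using interval_psubset_upper[OF po] less.prems z by blast
    then have "rho x < rho z"
      using less.hyps[OF psubset_card_mono[OF fin]] less.prems z by blast
    moreover have "{w\<in>P. le z w \<and> le w y} \<subset> {w\<in>P. le x w \<and> le w y}"
      using interval_psubset_lower[OF po] less.prems z by blast
    then have "rho z < rho y"
      using less.hyps[OF psubset_card_mono[OF fin]] less.prems z by blast
    ultimately show ?thesis by simp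
  qed
qed

lemma graded_rank_mono:
  assumes "finite P" "graded P le rho" "x \<in> P" "y \<in> P" "le x y"
  shows "rho x \<le> rho y"
  using graded_rank_less[OF assms] by fastforce

abbreviation zigzag :: "'a set \<Rightarrow> ('a \<Rightarrow> 'a \<Rightarrow> bool) \<Rightarrow> 'a rel \<Rightarrow> 'a rel" where
  "zigzag P le E \<equiv> (le_rel P le O E)\<^sup>* O le_rel P le"

lemma zigzag_trans:
  assumes "(x, y) \<in> zigzag P le E" "(y, y') \<in> E" "(y', z) \<in> zigzag P le E"
  shows "(x, z) \<in> zigzag P le E"
proof -
  obtain a where "(x, a) \<in> (le_rel P le O E)\<^sup>*" "(a, y) \<in> le_rel P le" using assms(1) by blast
  then have "(x, y') \<in> (le_rel P le O E)\<^sup>*" using assms(2) by (blast intro: rtrancl_into_rtrancl)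
  then show ?thesis using assms(3) by (blast intro: rtrancl_trans)
qed

locale rank_compatible_quotient =
  fixes P :: "'a set" and le :: "'a \<Rightarrow> 'a \<Rightarrow> bool" and rho :: "'a \<Rightarrow> nat" and E :: "'a rel"
  assumes finite: "finite P"
    and graded: "graded P le rho"
    and equiv: "equiv P E"
    and rank_resp: "(x, y) \<in> E \<Longrightarrow> rho x = rho y"
begin

lemma poset: "poset_on P le"
  using graded unfolding graded_def by blast

lemma rank_covers: "covers P le x y \<Longrightarrow> rho y = rho x + 1"
  using graded unfolding graded_def by blast

lemma rank_less: "x \<in> P \<Longrightarrow> y \<in> P \<Longrightarrow> le x y \<Longrightarrow> x \<noteq> y \<Longrightarrow> rho x < rho y"
  using graded_rank_less[OF finite graded] .

lemma rank_eq_imp_eq: "x \<in> P \<Longrightarrow> y \<in> P \<Longrightarrow> le x y \<Longrightarrow> rho x = rho y \<Longrightarrow> x = y"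
  using rank_less by fastforce

lemma rank_mono: "x \<in> P \<Longrightarrow> y \<in> P \<Longrightarrow> le x y \<Longrightarrow> rho x \<le> rho y"
  using graded_rank_mono[OF finite graded] .

lemma class_member_in_carrier: "X \<in> P // E \<Longrightarrow> x \<in> X \<Longrightarrow> x \<in> P"
  using in_quotient_imp_subset[OF equiv] by blast

lemma class_rank_eq: "X \<in> P // E \<Longrightarrow> x \<in> X \<Longrightarrow> y \<in> X \<Longrightarrow> rho x = rho y"
  using in_quotient_imp_in_rel[OF equiv] rank_resp by blast

lemma class_eq_iff:
  "X \<in> P // E \<Longrightarrow> Y \<in> P // E \<Longrightarrow> x \<in> X \<Longrightarrow> y \<in> Y \<Longrightarrow> X = Y \<longleftrightarrow> (x, y) \<in> E"
  using quotient_eq_iff[OF equiv] by blast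

lemma class_of_in_quotient: "x \<in> P \<Longrightarrow> E `` {x} \<in> P // E"
  by (rule quotientI)

lemma class_of_self: "x \<in> P \<Longrightarrow> x \<in> E `` {x}"
  using equiv by (rule equiv_class_self)

lemma quot_le_of_le:
  "x \<in> X \<Longrightarrow> y \<in> Y \<Longrightarrow> x \<in> P \<Longrightarrow> y \<in> P \<Longrightarrow> le x y \<Longrightarrow> quot_le P le E X Y"
  unfolding quot_le_def le_rel_def by blast

lemma zigzag_prefix_rank:
  assumes "(a, b) \<in> (le_rel P le O E)\<^sup>*"
  shows "rho a \<le> rho b \<and> (rho a = rho b \<longrightarrow> a = b \<or> (a, b) \<in> E)"
  using assms
proof (induction rule: rtrancl_induct)
  case base
  then show ?case by simp
next
  case (step b c)
  then obtain d where bd: "b \<in> P" "d \<in> P" "le b d" and dc: "(d, c) \<in> E"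
    unfolding le_rel_def by blast
  have "rho b \<le> rho c" using rank_mono[OF bd] rank_resp[OF dc] by simp
  moreover have "a = c \<or> (a, c) \<in> E" if "rho a = rho c"
  proof -
    have "rho a = rho b" "rho b = rho d"
      using that step.IH \<open>rho b \<le> rho c\<close> rank_resp[OF dc] by auto
    then have "(b, c) \<in> E" using rank_eq_imp_eq[OF bd] dc by simp
    then show ?thesis
      using step.IH \<open>rho a = rho b\<close> equiv unfolding equiv_def trans_def by blast
  qed
  ultimately show ?case using step.IH by auto
qed

lemma zigzag_rank:
  assumes "(a, b) \<in> zigzag P le E"
  shows "rho a \<le> rho b \<and> (rho a = rho b \<longrightarrow> (a, b) \<in> E)"
proof -
  obtain c where ac: "(a, c) \<in> (le_rel P le O E)\<^sup>*" and cb: "c \<in> P" "b \<in> P" "le c b"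
    using assms unfolding le_rel_def by blast
  have "rho c \<le> rho b" using rank_mono[OF cb] .
  moreover have "(a, b) \<in> E" if "rho a = rho b"
  proof -
    have "rho a = rho c" "rho c = rho b"
      using that zigzag_prefix_rank[OF ac] \<open>rho c \<le> rho b\<close> by auto
    then have "c = b" using rank_eq_imp_eq[OF cb] by simp
    moreover have "(c, c) \<in> E" using equiv \<open>c \<in> P\<close> unfolding equiv_def refl_on_def by blast
    ultimately show ?thesis using zigzag_prefix_rank[OF ac] \<open>rho a = rho c\<close> by blast
  qed
  ultimately show ?thesis using zigzag_prefix_rank[OF ac] by auto
qed

lemma quot_le_rank_less:
  assumes X: "X \<in> P // E" and Y: "Y \<in> P // E" and "quot_le P le E X Y" "X \<noteq> Y"
    and "x \<in> X" "y \<in> Y"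
  shows "rho x < rho y"
proof -
  obtain x' y' where x': "x' \<in> X" and y': "y' \<in> Y" and chain: "(x', y') \<in> zigzag P le E"
    using assms(3) unfolding quot_le_def by blast
  have "(x', y') \<notin> E" using class_eq_iff[OF X Y x' y'] \<open>X \<noteq> Y\<close> by blast
  then have "rho x' < rho y'" using zigzag_rank[OF chain] by auto
  then show ?thesis
    using class_rank_eq[OF X \<open>x \<in> X\<close> x'] class_rank_eq[OF Y \<open>y \<in> Y\<close> y'] by simp
qed

lemma poset_quotient: "poset_on (P // E) (quot_le P le E)"
  unfolding poset_on_def
proof (intro conjI ballI impI)
  fix X assume "X \<in> P // E"
  then obtain x where "x \<in> X" "x \<in> P"
    using in_quotient_imp_non_empty[OF equiv] class_member_in_carrier by blast
  moreover have "le x x" using poset \<open>x \<in> P\<close> unfolding poset_on_def by blast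
  ultimately show "quot_le P le E X X" using quot_le_of_le by blast
next
  fix X Y assume X: "X \<in> P // E" and Y: "Y \<in> P // E"
    and le_both: "quot_le P le E X Y \<and> quot_le P le E Y X"
  obtain x y where x: "x \<in> X" and y: "y \<in> Y"
    using in_quotient_imp_non_empty[OF equiv] X Y by blast
  show "X = Y"
  proof (rule ccontr)
    assume "X \<noteq> Y"
    then have "rho x < rho y" "rho y < rho x"
      using quot_le_rank_less[OF X Y _ _ x y] quot_le_rank_less[OF Y X _ _ y x] le_both by auto
    then show False by simp
  qed
next
  fix X Y Z assume Y: "Y \<in> P // E" and "quot_le P le E X Y \<and> quot_le P le E Y Z"
  then have "quot_le P le E X Y" "quot_le P le E Y Z" by simp_all
  then obtain x y y' z where "x \<in> X" "z \<in> Z" and y: "y \<in> Y" "y' \<in> Y"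
    and xy: "(x, y) \<in> zigzag P le E" and yz: "(y', z) \<in> zigzag P le E"
    unfolding quot_le_def by (elim bexE) (rule that)
  moreover have "(y, y') \<in> E" using in_quotient_imp_in_rel[OF equiv Y] y by blast
  ultimately have "(x, z) \<in> zigzag P le E" using zigzag_trans[OF xy _ yz] by blast
  then show "quot_le P le E X Z" unfolding quot_le_def using \<open>x \<in> X\<close> \<open>z \<in> Z\<close> by blast
qed

text \<open>The induction runs along the chain: as long as its points stay in X, the class of the
  next point lies between X and Y, so either the chain stays in X or it has just jumped to Y.\<close>

lemma zigzag_prefix_in_lower_class:
  assumes cover: "covers (P // E) (quot_le P le E) X Y"
    and "(a, b) \<in> (le_rel P le O E)\<^sup>*" "a \<in> X" "(b, y) \<in> zigzag P le E" "y \<in> Y"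
  shows "b \<in> X \<or> (\<exists>u\<in>X. \<exists>v\<in>Y. le u v)"
  using assms(2-)
proof (induction rule: rtrancl_induct)
  case base
  then show ?case by simp
next
  case (step b c)
  then obtain d where bd: "(b, d) \<in> le_rel P le" and dc: "(d, c) \<in> E" by blast
  have "(b, y) \<in> zigzag P le E"
    using bd dc step.prems(2) by (blast intro: converse_rtrancl_into_rtrancl)
  then consider "b \<in> X" | "\<exists>u\<in>X. \<exists>v\<in>Y. le u v" using step.IH step.prems by blast
  then show ?case
  proof cases
    case 1
    have "c \<in> P" using dc equiv unfolding equiv_def refl_on_def by auto
    define C where "C = E `` {c}"
    have C: "C \<in> P // E" "c \<in> C" "d \<in> C"
      unfolding C_def using class_of_in_quotient class_of_self \<open>c \<in> P\<close> dc equiv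
      unfolding equiv_def sym_def by auto
    have "quot_le P le E X C" unfolding quot_le_def using 1 bd \<open>d \<in> C\<close> by blast
    moreover have "quot_le P le E C Y" unfolding quot_le_def using \<open>c \<in> C\<close> step.prems by blast
    ultimately have "C = X \<or> C = Y" using cover C(1) unfolding covers_def by blast
    then show ?thesis using 1 C bd unfolding le_rel_def by blast
  qed blast
qed

lemma covers_quotient_imp_le:
  assumes "covers (P // E) (quot_le P le E) X Y"
  obtains u v where "u \<in> X" "v \<in> Y" "le u v"
proof -
  obtain x y a where "x \<in> X" "y \<in> Y" "(x, a) \<in> (le_rel P le O E)\<^sup>*" "(a, y) \<in> le_rel P le"
    using assms unfolding covers_def quot_le_def by blast
  then have "a \<in> X \<or> (\<exists>u\<in>X. \<exists>v\<in>Y. le u v)"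
    using zigzag_prefix_in_lower_class[OF assms] by blast
  then show ?thesis using that \<open>y \<in> Y\<close> \<open>(a, y) \<in> le_rel P le\<close> unfolding le_rel_def by blast
qed

lemma covers_quotient_imp_covers:
  assumes cover: "covers (P // E) (quot_le P le E) X Y"
  shows "\<exists>x\<in>X. \<exists>y\<in>Y. covers P le x y"
proof -
  have X: "X \<in> P // E" and Y: "Y \<in> P // E" and "X \<noteq> Y" using cover unfolding covers_def by auto
  obtain u v where u: "u \<in> X" and v: "v \<in> Y" and "le u v" using covers_quotient_imp_le[OF cover] .
  have uP: "u \<in> P" and vP: "v \<in> P" using class_member_in_carrier X Y u v by auto
  have "u \<noteq> v" using class_eq_iff[OF X Y u v] \<open>X \<noteq> Y\<close> uP equiv
    unfolding equiv_def refl_on_def by blast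
  have "\<not> (\<exists>w\<in>P. le u w \<and> le w v \<and> w \<noteq> u \<and> w \<noteq> v)"
  proof
    assume "\<exists>w\<in>P. le u w \<and> le w v \<and> w \<noteq> u \<and> w \<noteq> v"
    then obtain w where w: "w \<in> P" "le u w" "le w v" "w \<noteq> u" "w \<noteq> v" by blast
    have "rho u < rho w" "rho w < rho v"
      using rank_less[OF uP w(1,2)] rank_less[OF w(1) vP w(3,5)] w(4) by auto
    moreover have "quot_le P le E X (E `` {w})" "quot_le P le E (E `` {w}) Y"
      using quot_le_of_le class_of_self w u v uP vP by blast+
    then have "E `` {w} = X \<or> E `` {w} = Y"
      using cover class_of_in_quotient[OF \<open>w \<in> P\<close>] unfolding covers_def by blast
    then have "rho w = rho u \<or> rho w = rho v"
      using class_rank_eq[OF X _ u] class_rank_eq[OF Y _ v] class_of_self[OF \<open>w \<in> P\<close>] by metis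
    ultimately show False by linarith
  qed
  then show ?thesis
    using u v uP vP \<open>le u v\<close> \<open>u \<noteq> v\<close> unfolding covers_def by blast
qed

lemma covers_imp_covers_quotient:
  assumes X: "X \<in> P // E" and Y: "Y \<in> P // E" and x: "x \<in> X" and y: "y \<in> Y"
    and cover: "covers P le x y"
  shows "covers (P // E) (quot_le P le E) X Y"
proof -
  have "x \<in> P" "y \<in> P" "le x y" using cover unfolding covers_def by auto
  have rank_y: "rho y = rho x + 1" using rank_covers[OF cover] .
  have "X \<noteq> Y" using class_rank_eq[OF X x, of y] y rank_y by auto
  moreover have "quot_le P le E X Y" using quot_le_of_le x y \<open>x \<in> P\<close> \<open>y \<in> P\<close> \<open>le x y\<close> .
  moreover have "\<not> (\<exists>W\<in>P // E. quot_le P le E X W \<and> quot_le P le E W Y \<and> W \<noteq> X \<and> W \<noteq> Y)"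
  proof
    assume "\<exists>W\<in>P // E. quot_le P le E X W \<and> quot_le P le E W Y \<and> W \<noteq> X \<and> W \<noteq> Y"
    then obtain W where W: "W \<in> P // E" "quot_le P le E X W" "quot_le P le E W Y" "W \<noteq> X" "W \<noteq> Y"
      by blast
    obtain w where w: "w \<in> W" using in_quotient_imp_non_empty[OF equiv W(1)] by blast
    have "rho x < rho w" using quot_le_rank_less[OF X W(1,2) _ x w] W(4) by auto
    moreover have "rho w < rho y" using quot_le_rank_less[OF W(1) Y W(3,5) w y] .
    ultimately show False using rank_y by simp
  qed
  ultimately show ?thesis using X Y unfolding covers_def by blast
qed

definition quot_rank :: "'a set \<Rightarrow> nat" where
  "quot_rank X = rho (SOME x. x \<in> X)"

lemma quot_rank_eq:
  assumes "X \<in> P // E" "x \<in> X"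
  shows "quot_rank X = rho x"
proof -
  have "(SOME x. x \<in> X) \<in> X" using someI[of "\<lambda>x. x \<in> X"] \<open>x \<in> X\<close> .
  then show ?thesis unfolding quot_rank_def using class_rank_eq assms by blast
qed

lemma minimal_class_imp_minimal:
  assumes X: "X \<in> P // E" and x: "x \<in> X"
    and min: "\<forall>Y\<in>P // E. quot_le P le E Y X \<longrightarrow> Y = X"
  shows "\<forall>y\<in>P. le y x \<longrightarrow> y = x"
proof (intro ballI impI)
  fix y assume "y \<in> P" "le y x"
  have "x \<in> P" using class_member_in_carrier[OF X x] .
  have "quot_le P le E (E `` {y}) X"
    using quot_le_of_le[OF class_of_self x] \<open>y \<in> P\<close> \<open>x \<in> P\<close> \<open>le y x\<close> by blast
  then have "E `` {y} = X" using min class_of_in_quotient[OF \<open>y \<in> P\<close>] by blast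
  then have "rho y = rho x" using class_rank_eq[OF X _ x] class_of_self[OF \<open>y \<in> P\<close>] by blast
  then show "y = x" using rank_eq_imp_eq \<open>y \<in> P\<close> \<open>x \<in> P\<close> \<open>le y x\<close> by blast
qed

lemma graded_quotient: "graded (P // E) (quot_le P le E) quot_rank"
  unfolding graded_def
proof (intro conjI poset_quotient ballI impI allI)
  fix X assume X: "X \<in> P // E" and "\<forall>Y\<in>P // E. quot_le P le E Y X \<longrightarrow> Y = X"
  moreover obtain x where x: "x \<in> X" using in_quotient_imp_non_empty[OF equiv X] by blast
  ultimately have "\<forall>y\<in>P. le y x \<longrightarrow> y = x" using minimal_class_imp_minimal by blast
  then have "rho x = 0" using graded class_member_in_carrier[OF X x] unfolding graded_def by blast
  then show "quot_rank X = 0" using quot_rank_eq[OF X x] by simp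
next
  fix X Y assume cover: "covers (P // E) (quot_le P le E) X Y"
  then have "X \<in> P // E" "Y \<in> P // E" unfolding covers_def by auto
  moreover obtain x y where "x \<in> X" "y \<in> Y" "covers P le x y"
    using covers_quotient_imp_covers[OF cover] by blast
  ultimately show "quot_rank Y = quot_rank X + 1" using rank_covers quot_rank_eq by simp
qed

end

theorem proposition3p15:
  fixes P :: "'a set" and le :: "'a \<Rightarrow> 'a \<Rightarrow> bool" and rho :: "'a \<Rightarrow> nat"
    and E :: "'a rel"
  assumes "finite P"
    and "graded P le rho"
    and "equiv P E"
    and "\<And>x y. (x, y) \<in> E \<Longrightarrow> rho x = rho y"
  shows "poset_on (P // E) (quot_le P le E) \<and>
         (\<forall>X\<in>P // E. \<forall>Y\<in>P // E.
           covers (P // E) (quot_le P le E) X Y \<longleftrightarrow> (\<exists>x\<in>X. \<exists>y\<in>Y. covers P le x y)) \<and>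
         (\<exists>rhoQ. graded (P // E) (quot_le P le E) rhoQ \<and> (\<forall>X\<in>P // E. \<forall>x\<in>X. rhoQ X = rho x))"
proof -
  interpret rank_compatible_quotient P le rho E
    using assms by unfold_locales
  show ?thesis
    using poset_quotient covers_quotient_imp_covers covers_imp_covers_quotient
      graded_quotient quot_rank_eq by blast
qed

end
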